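(* Let $v\in\mathbb R^3$ with $|v|=1$ and let $\phi,\psi,\rho>0$. Let $P=\begin{bmatrix}P_{aa}&P_{ab}\\ P_{ab}^T&P_{bb}\end{bmatrix}$ be a $6\times6$ matrix with $P_{aa}=\phi I$, $P_{ab}=-\psi I$ and $P_{bb}$ arbitrary, let $R=\rho I$, and let $H=\begin{bmatrix}[v\times] & 0\end{bmatrix}$ ($3\times6$). Then $HPH^T+R$ is invertible and the Kalman gain $K=PH^T(HPH^T+R)^{-1}$ equals $$K=\frac{1}{1+\rho/\phi}\begin{bmatrix}I\\ -(\psi/\phi)I\end{bmatrix}[v\times]^T.$$ Consequently, for every $\xi\in\mathbb R^3$, $$K(\xi-v)=\frac{1}{1+\rho/\phi}\begin{bmatrix}\xi\times v\\ -(\psi/\phi)\,(\xi\times v)\end{bmatrix},$$ i.e. the EKF update $[\delta a;\delta b]=K(\xi-v)$ coincides with the complementary-filter update $\delta a=w_a\,(\xi\times v)$, $\delta b=-w_b\,\delta a$ with $w_a=\frac{1}{1+\rho/\phi}$ and $w_b=\psi/\phi$.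
   Context: $[v\times]$ denotes the $3\times3$ skew-symmetric matrix with $[v\times]w=v\times w$. $I$ is the $3\times3$ identity. *)

theory Defs
  imports "HOL-Analysis.Analysis"
begin

definition skew :: "real^3 \<Rightarrow> real^3^3" where
  "skew v = matrix (\<lambda>w. cross3 v w)"

text \<open>Vectors/matrices indexed by a sum type ('n + 'm) model block structure:
  Inl indices form the first block, Inr indices the second.\<close>

definition blockmat :: "real^'b^'a \<Rightarrow> real^'d^'a \<Rightarrow> real^'b^'c \<Rightarrow> real^'d^'c
      \<Rightarrow> real^('b + 'd)^('a + 'c)" where
  "blockmat A B C D = (\<chi> i j. case i of
      Inl a \<Rightarrow> (case j of Inl b \<Rightarrow> A $ a $ b | Inr d \<Rightarrow> B $ a $ d)
    | Inr c \<Rightarrow> (case j of Inl b \<Rightarrow> C $ c $ b | Inr d \<Rightarrow> D $ c $ d))"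

definition hblock :: "real^'b^'a \<Rightarrow> real^'d^'a \<Rightarrow> real^('b + 'd)^'a" where
  "hblock A B = (\<chi> i j. case j of Inl b \<Rightarrow> A $ i $ b | Inr d \<Rightarrow> B $ i $ d)"

definition vblock :: "real^'b^'a \<Rightarrow> real^'b^'c \<Rightarrow> real^'b^('a + 'c)" where
  "vblock A C = (\<chi> i j. case i of Inl a \<Rightarrow> A $ a $ j | Inr c \<Rightarrow> C $ c $ j)"

definition vstack :: "real^'a \<Rightarrow> real^'c \<Rightarrow> real^('a + 'c)" where
  "vstack x y = (\<chi> i. case i of Inl a \<Rightarrow> x $ a | Inr c \<Rightarrow> y $ c)"

end

theory Submission
  imports Defs
begin

text \<open>For a unit vector \<open>v\<close> we have \<open>[v\<times>][v\<times>]\<^sup>T = I - v v\<^sup>T\<close>, so the innovation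
  covariance \<open>H P H\<^sup>T + R = (\<phi> + \<rho>) I - \<phi> v v\<^sup>T\<close> is a rank-one perturbation of a multiple
  of the identity and is inverted by the Sherman--Morrison formula. Since \<open>[v\<times>]\<^sup>T v = v \<times> v = 0\<close>,
  the rank-one part of the inverse is annihilated by \<open>P H\<^sup>T = \<phi> [I; -(\<psi>/\<phi>) I] [v\<times>]\<^sup>T\<close>,
  leaving \<open>K = \<phi>/(\<phi> + \<rho>) [I; -(\<psi>/\<phi>) I] [v\<times>]\<^sup>T\<close>; finally \<open>[v\<times>]\<^sup>T (\<xi> - v) = \<xi> \<times> v\<close>.\<close>

lemma sum_UNIV_Plus:
  "sum f (UNIV :: ('a::finite + 'b::finite) set) = (\<Sum>a\<in>UNIV. f (Inl a)) + (\<Sum>b\<in>UNIV. f (Inr b))"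
  by (simp add: UNIV_Plus_UNIV[symmetric] sum.Plus comp_def del: UNIV_Plus_UNIV)

lemma hblock_mult_blockmat:
  fixes A :: "real^'b::finite^'a" and B :: "real^'d::finite^'a"
  shows "hblock A B ** blockmat P Q S T = hblock (A ** P + B ** S) (A ** Q + B ** T)"
  by (simp add: vec_eq_iff hblock_def blockmat_def matrix_matrix_mult_def sum_UNIV_Plus split: sum.split)

lemma hblock_mult_transpose_hblock:
  fixes A :: "real^'b::finite^'a" and B :: "real^'d::finite^'a"
  shows "hblock A B ** transpose (hblock C D) = A ** transpose C + B ** transpose D"
  by (simp add: vec_eq_iff hblock_def transpose_def matrix_matrix_mult_def sum_UNIV_Plus)

lemma blockmat_mult_transpose_hblock:
  fixes A :: "real^'b::finite^'a" and B :: "real^'d::finite^'a"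
  shows "blockmat A B C D ** transpose (hblock E F) =
    vblock (A ** transpose E + B ** transpose F) (C ** transpose E + D ** transpose F)"
  by (simp add: vec_eq_iff hblock_def blockmat_def vblock_def transpose_def matrix_matrix_mult_def
      sum_UNIV_Plus split: sum.split)

lemma vblock_mult: "vblock A C ** M = vblock (A ** M) (C ** M)"
  by (simp add: vec_eq_iff vblock_def matrix_matrix_mult_def split: sum.split)

lemma vblock_mult_vec: "vblock A C *v x = vstack (A *v x) (C *v x)"
  by (simp add: vec_eq_iff vblock_def vstack_def matrix_vector_mult_def split: sum.split)

lemma scaleR_vblock: "c *\<^sub>R vblock A C = vblock (c *\<^sub>R A) (c *\<^sub>R C)"
  by (simp add: vec_eq_iff vblock_def split: sum.split)

lemma transpose_zero [simp]: "transpose 0 = 0"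
  by (simp add: vec_eq_iff transpose_def)

definition outer_prod :: "real^'a \<Rightarrow> real^'b \<Rightarrow> real^'b^'a" where
  "outer_prod x y = (\<chi> i j. x $ i * y $ j)"

lemma outer_prod_zero_left [simp]: "outer_prod 0 y = 0"
  by (simp add: vec_eq_iff outer_prod_def)

lemma matrix_mult_outer_prod: "A ** outer_prod x y = outer_prod (A *v x) y"
  by (simp add: vec_eq_iff outer_prod_def matrix_matrix_mult_def matrix_vector_mult_def
      sum_distrib_right mult.assoc)

lemma outer_prod_mult_outer_prod: "outer_prod x y ** outer_prod z w = (y \<bullet> z) *\<^sub>R outer_prod x w"
  by (simp add: vec_eq_iff outer_prod_def matrix_matrix_mult_def inner_vec_def
      sum_distrib_left sum_distrib_right ac_simps)

lemma transpose_skew_mult_vec: "transpose (skew v) *v w = cross3 w v"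
  by (simp add: vec_eq_iff forall_3 skew_def matrix_def transpose_def matrix_vector_mult_def sum_3
      cross3_def axis_def)

lemma transpose_skew_mult_outer_prod: "transpose (skew v) ** outer_prod v w = 0"
  by (simp add: matrix_mult_outer_prod transpose_skew_mult_vec del: transpose_matrix_vector)

lemma skew_mult_transpose_skew: "skew v ** transpose (skew v) = (v \<bullet> v) *\<^sub>R mat 1 - outer_prod v v"
  by (simp add: vec_eq_iff forall_3 skew_def matrix_def transpose_def matrix_matrix_mult_def outer_prod_def mat_def
      cross3_def inner_vec_def sum_3 axis_def algebra_simps)

lemma matrix_inv_eq_right_inverse:
  fixes A B :: "'a::field^'n^'n"
  assumes "A ** B = mat 1"
  shows "invertible A \<and> matrix_inv A = B"
proof -
  have BA: "B ** A = mat 1" using assms matrix_left_right_inverse by blast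
  then have "A ** matrix_inv A = mat 1 \<and> matrix_inv A ** A = mat 1"
    unfolding matrix_inv_def using assms by (rule someI[of _ B, OF conjI[rotated]])
  then have "matrix_inv A = B"
    by (metis BA matrix_mul_assoc matrix_mul_lid matrix_mul_rid)
  with assms BA show ?thesis unfolding invertible_def by blast
qed

lemma matrix_diff_rdistrib: "(A - B) ** C = A ** C - B ** (C :: 'a::ring_1^'p^'n)"
  by (simp add: vec_eq_iff matrix_matrix_mult_def sum_subtractf left_diff_distrib)

lemma rank_one_update_inverse:
  assumes "\<alpha> \<noteq> 0" "\<alpha> \<noteq> \<beta> * (y \<bullet> x)"
  shows "(\<alpha> *\<^sub>R mat 1 - \<beta> *\<^sub>R outer_prod x y)
      ** ((1 / \<alpha>) *\<^sub>R mat 1 + (\<beta> / (\<alpha> * (\<alpha> - \<beta> * (y \<bullet> x)))) *\<^sub>R outer_prod x y) = mat 1"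
    (is "(_ - _ *\<^sub>R ?O) ** (_ + ?c *\<^sub>R _) = _")
proof -
  have "(\<alpha> *\<^sub>R mat 1 - \<beta> *\<^sub>R ?O) ** ((1 / \<alpha>) *\<^sub>R mat 1 + ?c *\<^sub>R ?O)
      = mat 1 + (\<alpha> * ?c - \<beta> / \<alpha> - \<beta> * ?c * (y \<bullet> x)) *\<^sub>R ?O"
    using assms(1)
    by (simp add: matrix_diff_rdistrib matrix_add_ldistrib matrix_scalar_ac
        scalar_matrix_assoc[symmetric] outer_prod_mult_outer_prod scaleR_diff_left
        scaleR_diff_right)
  also have "\<alpha> * ?c - \<beta> / \<alpha> - \<beta> * ?c * (y \<bullet> x) = 0"
    using assms by (simp add: field_simps)
  finally show ?thesis by simp
qed

theorem mainTheorem9: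
  fixes v :: "real^3" and \<phi> \<psi> \<rho> :: real
    and Pbb :: "real^3^3" and P :: "real^(3+3)^(3+3)"
    and H :: "real^(3+3)^3" and R :: "real^3^3"
  assumes "norm v = 1"
    and "\<phi> > 0" and "\<psi> > 0" and "\<rho> > 0"
    and "P = blockmat (\<phi> *\<^sub>R mat 1) (- \<psi> *\<^sub>R mat 1)
                      (transpose (- \<psi> *\<^sub>R mat 1)) Pbb"
    and "R = \<rho> *\<^sub>R mat 1"
    and "H = hblock (skew v) 0"
  shows "invertible (H ** P ** transpose H + R) \<and>
    (let K = P ** transpose H ** matrix_inv (H ** P ** transpose H + R)
     in K = (1 / (1 + \<rho> / \<phi>)) *\<^sub>R
              (vblock (mat 1) (- (\<psi> / \<phi>) *\<^sub>R mat 1) ** transpose (skew v))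
      \<and> (\<forall>\<xi> :: real^3. K *v (\<xi> - v) =
            (1 / (1 + \<rho> / \<phi>)) *\<^sub>R
              vstack (cross3 \<xi> v) (- (\<psi> / \<phi>) *\<^sub>R cross3 \<xi> v)))"
proof -
  let ?G = "vblock (mat 1) (- (\<psi> / \<phi>) *\<^sub>R mat 1) :: real^3^(3+3)"
  let ?S = "H ** P ** transpose H + R"
  \<comment> \<open>the Sherman--Morrison inverse of \<open>?S\<close>\<close>
  define N :: "real^3^3"
    where "N = (1 / (\<phi> + \<rho>)) *\<^sub>R mat 1 + (\<phi> / ((\<phi> + \<rho>) * \<rho>)) *\<^sub>R outer_prod v v"
  have unit: "v \<bullet> v = 1"
    using \<open>norm v = 1\<close> by (simp add: power2_norm_eq_inner[symmetric])
  have "?S = (\<phi> + \<rho>) *\<^sub>R mat 1 - \<phi> *\<^sub>R outer_prod v v"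
    using unit by (simp add: assms hblock_mult_blockmat hblock_mult_transpose_hblock
        matrix_scalar_ac scalar_matrix_assoc[symmetric] skew_mult_transpose_skew algebra_simps)
  also have "\<dots> ** N = mat 1"
    using rank_one_update_inverse[of "\<phi> + \<rho>" \<phi> v v] assms(2,4) unit by (simp add: N_def)
  finally have inv: "invertible ?S" and S_inv: "matrix_inv ?S = N"
    using matrix_inv_eq_right_inverse by blast+
  have gain_factor: "P ** transpose H = \<phi> *\<^sub>R (?G ** transpose (skew v))"
    using assms(2) less_imp_neq[OF assms(2)]
    by (simp add: assms blockmat_mult_transpose_hblock vblock_mult scaleR_vblock
        scalar_matrix_assoc[symmetric] transpose_scalar scaleR_minus_left[symmetric]
        del: scaleR_minus_left)
  have "P ** transpose H ** matrix_inv ?S = \<phi> *\<^sub>R (?G ** transpose (skew v)) ** N"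
    unfolding S_inv gain_factor ..
  also have "\<dots> = (1 / (1 + \<rho> / \<phi>)) *\<^sub>R (?G ** transpose (skew v))"
    using assms(2,4) by (simp add: N_def matrix_add_ldistrib matrix_scalar_ac scalar_matrix_assoc[symmetric]
        matrix_mul_assoc[symmetric] transpose_skew_mult_outer_prod field_simps)
  finally have K: "P ** transpose H ** matrix_inv ?S = (1 / (1 + \<rho> / \<phi>)) *\<^sub>R (?G ** transpose (skew v))" .
  show ?thesis
    using inv K
    by (simp add: matrix_vector_mul_assoc[symmetric] transpose_skew_mult_vec vblock_mult_vec
        scaleR_matrix_vector_assoc[symmetric] scaleR_minus_left[symmetric] Cross3.left_diff_distrib
        del: transpose_matrix_vector scaleR_minus_left)
qed

end
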